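(* Let $R>r>0$, $q=\frac{1}{2r}-\frac{1}{2R}$, and let $K^{-1/2}_0$, $\mathcal{K}^*_{\partial\Omega}$ and the family $\{\mathbb{E}(t)\}_{t\in[-1/2,1/2]}$ be as described in the context. Then $\mathcal{K}^*_{\partial\Omega}$ has the spectral resolution $$\mathcal{K}^*_{\partial\Omega}=\int_{-1/2}^{1/2} t\,d\mathbb{E}(t),$$ that is, for all $f,g\in K^{-1/2}_0$, $$\langle f,\mathcal{K}^*_{\partial\Omega}[g]\rangle_{-1/2}=\int_{-1/2}^{1/2} t\,d\langle f,\mathbb{E}(t)g\rangle_{-1/2}.$$
   Context: Setting (crescent domain). Identify $\mathbb{R}^2$ with $\mathbb{C}$; for $a\in\mathbb{R}\setminus\{0\}$ let $B_a$ be the open disk of radius $|a|$ centered at $(a,0)$. Fix $R>r>0$ and let $\Omega=B_R\setminus\overline{B_r}$ (a crescent with a cusp at $0$). Put $q=\frac{1}{2r}-\frac{1}{2R}>0$. For $k\in\mathbb{R}\setminus\{0\}$ define the diagonal matrices $$\mathbb{S}(k)=\frac{1}{2|k|}\begin{bmatrix}1-e^{-|k|q}&0\\0&1+e^{-|k|q}\end{bmatrix},\qquad \mathbb{K}(k)=\frac12 e^{-|k|q}\begin{bmatrix}-1&0\\0&1\end{bmatrix}.$$ The space $K^{-1/2}_0$ is the Hilbert space of pairs $\hat\varphi=(\hat\varphi_1,\hat\varphi_2)^T$ of measurable complex-valued functions on $\mathbb{R}$ (modulo a.e. equality) with $\int_{\mathbb{R}}\hat\varphi(k)^T\mathbb{S}(k)\overline{\hat\varphi(k)}\,dk<\infty$,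 with inner product $\langle\psi,\varphi\rangle_{-1/2}=\int_{\mathbb{R}}\hat\psi(k)^T\mathbb{S}(k)\overline{\hat\varphi(k)}\,dk$. (In the paper an element $\varphi$ of this space is the boundary density $\varphi=U^{-1}P\hat\varphi$ on $\partial\Omega$, where $P=\frac1{\sqrt2}\begin{bmatrix}-1&1\\1&1\end{bmatrix}$ and $U\varphi=(\mathcal{F}(h_R\varphi_R),\mathcal{F}(h_r\varphi_r))^T$ is the Fourier transform of the density pulled back by $z\mapsto 1/z$ to the lines $x=\frac1{2R}$, $x=\frac1{2r}$, with $h_a(y)=1/((2a)^{-2}+y^2)$; one writes $PU\varphi=(\hat\varphi_1,\hat\varphi_2)^T$.) The Neumann–Poincaré operator $\mathcal{K}^*_{\partial\Omega}$ on $K^{-1/2}_0$ is defined by $PU(\mathcal{K}^*_{\partial\Omega}[\varphi])(k)=\mathbb{K}(k)\,PU\varphi(k)$, i.e. it multiplies $\hat\varphi_1$ by $-\frac12e^{-|k|q}$ and $\hat\varphi_2$ by $\frac12 e^{-|k|q}$. For $s\in\mathbb{R}\cup\{\infty\}$ define orthogonal projections $\mathcal{P}^1(s)(\hat\varphi_1,\hat\varphi_2)=(\chi_{(-\infty,s]}\hat\varphi_1,0)$ and $\mathcal{P}^2(s)(\hat\varphi_1,\hat\varphi_2)=(0,\chi_{(-\infty,s]}\hat\varphi_2)$ (with $\chi_{(-\infty,\infty]}\equiv1$), and let $\mathbb{I}=\mathcal{P}^1(\infty)+\mathcal{P}^2(\infty)$ be the identity. Define $$\mathbb{E}(t)=\begin{cases}\mathcal{P}^1\!\left(-\frac{\ln(-2t)}{q}\right)-\mathcal{P}^1\!\left(\frac{\ln(-2t)}{q}\right),&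 t\in[-1/2,0),\\[2pt] \mathcal{P}^2\!\left(\frac{\ln(2t)}{q}\right)-\mathcal{P}^2\!\left(-\frac{\ln(2t)}{q}\right)+\mathbb{I},& t\in(0,1/2],\end{cases}\qquad \mathbb{E}(0)=\lim_{t\to0^+}\mathbb{E}(t).$$ *)

theory Defs
  imports "HOL-Analysis.Analysis"
begin

definition q_of :: "real \<Rightarrow> real \<Rightarrow> real" where
  "q_of R r = 1 / (2 * r) - 1 / (2 * R)"

definition S11 :: "real \<Rightarrow> real \<Rightarrow> real" where
  "S11 q k = (1 - exp (- \<bar>k\<bar> * q)) / (2 * \<bar>k\<bar>)"
definition S22 :: "real \<Rightarrow> real \<Rightarrow> real" where
  "S22 q k = (1 + exp (- \<bar>k\<bar> * q)) / (2 * \<bar>k\<bar>)"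
definition K11 :: "real \<Rightarrow> real \<Rightarrow> real" where
  "K11 q k = - (1/2) * exp (- \<bar>k\<bar> * q)"
definition K22 :: "real \<Rightarrow> real \<Rightarrow> real" where
  "K22 q k = (1/2) * exp (- \<bar>k\<bar> * q)"

text \<open>Representatives (hat phi_1, hat phi_2) of elements of K^{-1/2}_0.\<close>
type_synonym dens = "(real \<Rightarrow> complex) \<times> (real \<Rightarrow> complex)"

definition in_K :: "real \<Rightarrow> dens \<Rightarrow> bool" where
  "in_K q \<phi> \<longleftrightarrow>
     fst \<phi> \<in> borel_measurable lborel \<and> snd \<phi> \<in> borel_measurable lborel \<and>
     integrable lborel (\<lambda>k. S11 q k * (cmod (fst \<phi> k))\<^sup>2) \<and>
     integrable lborel (\<lambda>k. S22 q k * (cmod (snd \<phi> k))\<^sup>2)"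

definition ipK :: "real \<Rightarrow> dens \<Rightarrow> dens \<Rightarrow> complex" where
  "ipK q \<psi> \<phi> = (LINT k|lborel.
      complex_of_real (S11 q k) * fst \<psi> k * cnj (fst \<phi> k)
    + complex_of_real (S22 q k) * snd \<psi> k * cnj (snd \<phi> k))"

definition NP :: "real \<Rightarrow> dens \<Rightarrow> dens" where
  "NP q \<phi> = (\<lambda>k. complex_of_real (K11 q k) * fst \<phi> k,
              \<lambda>k. complex_of_real (K22 q k) * snd \<phi> k)"

definition chi :: "real \<Rightarrow> real \<Rightarrow> complex" where
  "chi s k = (if k \<le> s then 1 else 0)"

definition P1 :: "real \<Rightarrow> dens \<Rightarrow> dens" where
  "P1 s \<phi> = (\<lambda>k. chi s k * fst \<phi> k, \<lambda>k. 0)"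
definition P2 :: "real \<Rightarrow> dens \<Rightarrow> dens" where
  "P2 s \<phi> = (\<lambda>k. 0, \<lambda>k. chi s k * snd \<phi> k)"

text \<open>The spectral family E(t).  E(0) = lim_{t->0+} E(t) = P^1(infinity).\<close>
definition Efam :: "real \<Rightarrow> real \<Rightarrow> dens \<Rightarrow> dens" where
  "Efam q t \<phi> =
    (if t < 0 then
       (\<lambda>k. fst (P1 (- ln (-2*t) / q) \<phi>) k - fst (P1 (ln (-2*t) / q) \<phi>) k,
        \<lambda>k. snd (P1 (- ln (-2*t) / q) \<phi>) k - snd (P1 (ln (-2*t) / q) \<phi>) k)
     else if t = 0 then (fst \<phi>, \<lambda>k. 0)
     else
       (\<lambda>k. fst (P2 (ln (2*t) / q) \<phi>) k - fst (P2 (- ln (2*t) / q) \<phi>) k + fst \<phi> k,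
        \<lambda>k. snd (P2 (ln (2*t) / q) \<phi>) k - snd (P2 (- ln (2*t) / q) \<phi>) k + snd \<phi> k))"

definition tagged_partition_RS ::
    "real \<Rightarrow> real \<Rightarrow> nat \<Rightarrow> (nat \<Rightarrow> real) \<Rightarrow> (nat \<Rightarrow> real) \<Rightarrow> bool" where
  "tagged_partition_RS a b n x \<xi> \<longleftrightarrow>
     x 0 = a \<and> x n = b \<and>
     (\<forall>i<n. x i < x (Suc i) \<and> x i \<le> \<xi> i \<and> \<xi> i \<le> x (Suc i))"

definition has_RS_integral ::
    "(real \<Rightarrow> complex) \<Rightarrow> (real \<Rightarrow> complex) \<Rightarrow> real \<Rightarrow> real \<Rightarrow> complex \<Rightarrow> bool" where
  "has_RS_integral f g a b I \<longleftrightarrow>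
     (\<forall>\<epsilon>>0. \<exists>\<delta>>0. \<forall>n x \<xi>.
        tagged_partition_RS a b n x \<xi> \<and> (\<forall>i<n. x (Suc i) - x i < \<delta>) \<longrightarrow>
        cmod ((\<Sum>i<n. f (\<xi> i) * (g (x (Suc i)) - g (x i))) - I) < \<epsilon>)"

end

theory Submission
  imports Defs
begin

(* In the Fourier picture E(t) multiplies the two components of a density at frequency k by
   0/1-valued functions of t which jump from 0 to 1 exactly at the eigenvalues
   -exp(-|k| q)/2 and exp(-|k| q)/2 of K(k).  A Riemann-Stieltjes sum of t against such a unit
   step, over a tagged partition of mesh < \<delta>, picks out one tag lying next to the jump, so it
   is within \<delta> of the eigenvalue, uniformly in k.  Integrating this pointwise estimate against
   the integrable densities S_jj(k) f_j(k) conj(g_j(k)) shows that the Riemann-Stieltjes sums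
   of t d<f, E(t) g> are within \<delta> times a constant of <f, K* g>. *)

(* The value at the jump itself is left free: E(t) uses closed half-lines on both sides. *)
definition unit_step_at :: "real \<Rightarrow> real \<Rightarrow> (real \<Rightarrow> real) \<Rightarrow> real \<Rightarrow> bool" where
  "unit_step_at a b c \<mu> \<longleftrightarrow>
     c a = 0 \<and> c b = 1 \<and> (\<forall>t\<in>{a..b}. (c t = 0 \<and> t \<le> \<mu>) \<or> (c t = 1 \<and> \<mu> \<le> t))"

lemma step_sequence_tag_sum:
  fixes x \<xi> y :: "nat \<Rightarrow> real"
  assumes "\<forall>i<n. x i < x (Suc i) \<and> x i \<le> \<xi> i \<and> \<xi> i \<le> x (Suc i) \<and> x (Suc i) - x i < \<delta>"
    and "\<forall>i\<le>n. (y i = 0 \<and> x i \<le> \<mu>) \<or> (y i = 1 \<and> \<mu> \<le> x i)"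
    and "y 0 = 0"
  shows "(y n = 0 \<longrightarrow> (\<Sum>i<n. \<xi> i * (y (Suc i) - y i)) = 0) \<and>
         (y n = 1 \<longrightarrow> \<bar>(\<Sum>i<n. \<xi> i * (y (Suc i) - y i)) - \<mu>\<bar> < \<delta>)"
  using assms
proof (induction n)
  case 0
  then show ?case by simp
next
  case (Suc n)
  let ?S = "\<Sum>i<n. \<xi> i * (y (Suc i) - y i)"
  have IH: "(y n = 0 \<longrightarrow> ?S = 0) \<and> (y n = 1 \<longrightarrow> \<bar>?S - \<mu>\<bar> < \<delta>)"
    using Suc.prems by (intro Suc.IH) auto
  have tag: "x n < x (Suc n)" "x n \<le> \<xi> n" "\<xi> n \<le> x (Suc n)" "x (Suc n) - x n < \<delta>"
    using Suc.prems(1) by auto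
  have "(y n = 0 \<and> x n \<le> \<mu>) \<or> (y n = 1 \<and> \<mu> \<le> x n)"
    and "(y (Suc n) = 0 \<and> x (Suc n) \<le> \<mu>) \<or> (y (Suc n) = 1 \<and> \<mu> \<le> x (Suc n))"
    using Suc.prems(2) by (auto simp del: le_Suc_eq)
  then consider "y n = 0" "y (Suc n) = 0"
    | "y n = 0" "y (Suc n) = 1" "x n \<le> \<mu>" "\<mu> \<le> x (Suc n)"
    | "y n = 1" "y (Suc n) = 1"
    using tag(1) by linarith
  then show ?case
  proof cases
    case 2
    then have "\<bar>\<xi> n - \<mu>\<bar> < \<delta>" using tag by linarith
    then show ?thesis using IH 2 by simp
  qed (use IH in simp_all)
qed

lemma tagged_partition_RS_points_in_interval:
  assumes "tagged_partition_RS a b n x \<xi>" "i \<le> n"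
  shows "x i \<in> {a..b}"
proof -
  have step: "x k \<le> x (Suc k)" if "k \<in> {..<n}" for k
    using assms(1) that unfolding tagged_partition_RS_def by (simp add: less_imp_le)
  have "x 0 \<le> x i" "x i \<le> x n"
    using assms(2) by (auto intro: lift_Suc_mono_le_ivl[of "{..<n}" x, OF step])
  then show ?thesis
    using assms(1) unfolding tagged_partition_RS_def by simp
qed

lemma RS_sum_unit_step:
  assumes "tagged_partition_RS a b n x \<xi>" "\<forall>i<n. x (Suc i) - x i < \<delta>"
    and "unit_step_at a b c \<mu>"
  shows "\<bar>(\<Sum>i<n. \<xi> i * (c (x (Suc i)) - c (x i))) - \<mu>\<bar> < \<delta>"
proof -
  have "\<forall>i<n. x i < x (Suc i) \<and> x i \<le> \<xi> i \<and> \<xi> i \<le> x (Suc i) \<and> x (Suc i) - x i < \<delta>"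
    using assms(1,2) unfolding tagged_partition_RS_def by blast
  moreover have "\<forall>i\<le>n. (c (x i) = 0 \<and> x i \<le> \<mu>) \<or> (c (x i) = 1 \<and> \<mu> \<le> x i)"
    using assms(1,3) tagged_partition_RS_points_in_interval unfolding unit_step_at_def by blast
  moreover have "c (x 0) = 0" "c (x n) = 1"
    using assms(1,3) unfolding tagged_partition_RS_def unit_step_at_def by simp_all
  ultimately show ?thesis
    using step_sequence_tag_sum[of n x \<xi> \<delta> "\<lambda>i. c (x i)" \<mu>] by blast
qed

lemma has_RS_integral_add:
  assumes "has_RS_integral f g1 a b I1" "has_RS_integral f g2 a b I2"
  shows "has_RS_integral f (\<lambda>t. g1 t + g2 t) a b (I1 + I2)"
  unfolding has_RS_integral_def
proof (intro allI impI)
  fix \<epsilon> :: real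
  assume "0 < \<epsilon>"
  obtain \<delta>1 where "0 < \<delta>1"
    and \<delta>1: "\<And>n x \<xi>. tagged_partition_RS a b n x \<xi> \<Longrightarrow> \<forall>i<n. x (Suc i) - x i < \<delta>1 \<Longrightarrow>
        cmod ((\<Sum>i<n. f (\<xi> i) * (g1 (x (Suc i)) - g1 (x i))) - I1) < \<epsilon> / 2"
    using assms(1)[unfolded has_RS_integral_def, rule_format, OF half_gt_zero[OF \<open>0 < \<epsilon>\<close>]]
    by blast
  obtain \<delta>2 where "0 < \<delta>2"
    and \<delta>2: "\<And>n x \<xi>. tagged_partition_RS a b n x \<xi> \<Longrightarrow> \<forall>i<n. x (Suc i) - x i < \<delta>2 \<Longrightarrow>
        cmod ((\<Sum>i<n. f (\<xi> i) * (g2 (x (Suc i)) - g2 (x i))) - I2) < \<epsilon> / 2"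
    using assms(2)[unfolded has_RS_integral_def, rule_format, OF half_gt_zero[OF \<open>0 < \<epsilon>\<close>]]
    by blast
  show "\<exists>\<delta>>0. \<forall>n x \<xi>. tagged_partition_RS a b n x \<xi> \<and> (\<forall>i<n. x (Suc i) - x i < \<delta>) \<longrightarrow>
      cmod ((\<Sum>i<n. f (\<xi> i) * (g1 (x (Suc i)) + g2 (x (Suc i)) - (g1 (x i) + g2 (x i))))
            - (I1 + I2)) < \<epsilon>"
  proof (intro exI[of _ "min \<delta>1 \<delta>2"] conjI allI impI)
    fix n x \<xi>
    let ?R1 = "(\<Sum>i<n. f (\<xi> i) * (g1 (x (Suc i)) - g1 (x i))) - I1"
    let ?R2 = "(\<Sum>i<n. f (\<xi> i) * (g2 (x (Suc i)) - g2 (x i))) - I2"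
    assume "tagged_partition_RS a b n x \<xi> \<and> (\<forall>i<n. x (Suc i) - x i < min \<delta>1 \<delta>2)"
    then have "cmod ?R1 < \<epsilon> / 2" "cmod ?R2 < \<epsilon> / 2"
      using \<delta>1[of n x \<xi>] \<delta>2[of n x \<xi>] by simp_all
    then have "cmod (?R1 + ?R2) < \<epsilon>"
      using norm_triangle_ineq[of ?R1 ?R2] by linarith
    moreover have "(\<Sum>i<n. f (\<xi> i) * (g1 (x (Suc i)) + g2 (x (Suc i)) - (g1 (x i) + g2 (x i))))
        = (\<Sum>i<n. f (\<xi> i) * (g1 (x (Suc i)) - g1 (x i)))
          + (\<Sum>i<n. f (\<xi> i) * (g2 (x (Suc i)) - g2 (x i)))"
      by (subst sum.distrib[symmetric]) (simp add: algebra_simps)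
    ultimately show "cmod ((\<Sum>i<n. f (\<xi> i) * (g1 (x (Suc i)) + g2 (x (Suc i))
        - (g1 (x i) + g2 (x i)))) - (I1 + I2)) < \<epsilon>"
      by (simp add: algebra_simps)
  qed (use \<open>0 < \<delta>1\<close> \<open>0 < \<delta>2\<close> in simp)
qed

lemma integrable_bounded_multiplier:
  fixes h :: "'a \<Rightarrow> complex" and c :: "'a \<Rightarrow> real"
  assumes "integrable M h" "c \<in> borel_measurable M" "\<And>x. \<bar>c x\<bar> \<le> B"
  shows "integrable M (\<lambda>x. of_real (c x) * h x)"
proof (rule Bochner_Integration.integrable_bound)
  show "integrable M (\<lambda>x. B * norm (h x))"
    using assms(1) by auto
  have "\<bar>c x\<bar> \<le> \<bar>B\<bar>" for x
    using assms(3)[of x] by linarith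
  then show "AE x in M. norm (of_real (c x) * h x) \<le> norm (B * norm (h x))"
    by (auto simp: norm_mult abs_mult intro!: mult_right_mono)
qed (use assms in measurable)

lemma unit_step_at_bounded:
  assumes "unit_step_at a b c \<mu>" "t \<in> {a..b}"
  shows "\<bar>c t\<bar> \<le> 1"
  using assms unfolding unit_step_at_def by fastforce

lemma unit_step_at_jump_in_interval:
  assumes "unit_step_at a b c \<mu>" "a \<le> b"
  shows "\<mu> \<in> {a..b}"
  using assms unfolding unit_step_at_def by force

lemma RS_sum_of_integrals:
  fixes h :: "'a \<Rightarrow> complex" and c :: "real \<Rightarrow> 'a \<Rightarrow> real" and x \<xi> :: "nat \<Rightarrow> real"
  assumes "\<And>i. i \<le> n \<Longrightarrow> integrable M (\<lambda>y. of_real (c (x i) y) * h y)"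
  defines "S y \<equiv> \<Sum>i<n. \<xi> i * (c (x (Suc i)) y - c (x i) y)"
  shows "integrable M (\<lambda>y. of_real (S y) * h y)"
    and "(\<Sum>i<n. of_real (\<xi> i) * ((LINT y|M. of_real (c (x (Suc i)) y) * h y)
            - (LINT y|M. of_real (c (x i) y) * h y)))
         = (LINT y|M. of_real (S y) * h y)"
proof -
  have S_eq: "(\<lambda>y. of_real (S y) * h y) = (\<lambda>y. \<Sum>i<n. of_real (\<xi> i) *
      (of_real (c (x (Suc i)) y) * h y - of_real (c (x i) y) * h y))"
    by (simp add: fun_eq_iff S_def sum_distrib_right left_diff_distrib right_diff_distrib mult.assoc)
  have int_diff: "integrable M (\<lambda>y. of_real (c (x (Suc i)) y) * h y - of_real (c (x i) y) * h y)"
    if "i < n" for i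
    using that assms(1) by simp
  then show "integrable M (\<lambda>y. of_real (S y) * h y)"
    unfolding S_eq by auto
  have "(LINT y|M. of_real (S y) * h y) = (\<Sum>i<n. LINT y|M. of_real (\<xi> i) *
      (of_real (c (x (Suc i)) y) * h y - of_real (c (x i) y) * h y))"
    unfolding S_eq using int_diff by (simp add: Bochner_Integration.integral_sum)
  also have "\<dots> = (\<Sum>i<n. of_real (\<xi> i) * ((LINT y|M. of_real (c (x (Suc i)) y) * h y)
      - (LINT y|M. of_real (c (x i) y) * h y)))"
    using assms(1) by (intro sum.cong refl) (simp add: Bochner_Integration.integral_diff)
  finally show "(\<Sum>i<n. of_real (\<xi> i) * ((LINT y|M. of_real (c (x (Suc i)) y) * h y)
      - (LINT y|M. of_real (c (x i) y) * h y))) = (LINT y|M. of_real (S y) * h y)" ..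
qed

lemma has_RS_integral_unit_step_multiplier:
  fixes h :: "'a \<Rightarrow> complex" and c :: "real \<Rightarrow> 'a \<Rightarrow> real" and \<mu> :: "'a \<Rightarrow> real"
  assumes "a \<le> b" "integrable M h"
    and "\<And>t. c t \<in> borel_measurable M" "\<mu> \<in> borel_measurable M"
    and step: "\<And>y. unit_step_at a b (\<lambda>t. c t y) (\<mu> y)"
  shows "has_RS_integral of_real (\<lambda>t. LINT y|M. of_real (c t y) * h y) a b
           (LINT y|M. of_real (\<mu> y) * h y)"
  unfolding has_RS_integral_def
proof (intro allI impI)
  fix \<epsilon> :: real
  assume "0 < \<epsilon>"
  define N where "N = (LINT y|M. norm (h y))"
  define \<delta> where "\<delta> = \<epsilon> / (N + 1)"
  have "0 \<le> N"
    unfolding N_def by simp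
  then have "0 < \<delta>" and "\<delta> * N < \<epsilon>"
    using \<open>0 < \<epsilon>\<close> by (auto simp: \<delta>_def field_simps)
  have "\<bar>\<mu> y\<bar> \<le> \<bar>a\<bar> + \<bar>b\<bar>" for y
    using unit_step_at_jump_in_interval[OF step[of y] \<open>a \<le> b\<close>] by auto
  then have int_\<mu>: "integrable M (\<lambda>y. of_real (\<mu> y) * h y)"
    by (intro integrable_bounded_multiplier assms)
  show "\<exists>\<delta>>0. \<forall>n x \<xi>. tagged_partition_RS a b n x \<xi> \<and> (\<forall>i<n. x (Suc i) - x i < \<delta>) \<longrightarrow>
      cmod ((\<Sum>i<n. of_real (\<xi> i) * ((LINT y|M. of_real (c (x (Suc i)) y) * h y)
              - (LINT y|M. of_real (c (x i) y) * h y))) - (LINT y|M. of_real (\<mu> y) * h y)) < \<epsilon>"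
  proof (intro exI[of _ \<delta>] conjI allI impI \<open>0 < \<delta>\<close>)
    fix n x \<xi>
    assume "tagged_partition_RS a b n x \<xi> \<and> (\<forall>i<n. x (Suc i) - x i < \<delta>)"
    then have partition: "tagged_partition_RS a b n x \<xi>" and mesh: "\<forall>i<n. x (Suc i) - x i < \<delta>"
      by auto
    define S where "S y = (\<Sum>i<n. \<xi> i * (c (x (Suc i)) y - c (x i) y))" for y
    have "integrable M (\<lambda>y. of_real (c (x i) y) * h y)" if "i \<le> n" for i
      using unit_step_at_bounded[OF step tagged_partition_RS_points_in_interval[OF partition that]]
      by (intro integrable_bounded_multiplier assms)
    note RS_sum = RS_sum_of_integrals[where n = n and c = c and x = x and \<xi> = \<xi>, OF this, folded S_def]
    have D_int: "integrable M (\<lambda>y. of_real (S y - \<mu> y) * h y)"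
      using RS_sum(1) int_\<mu> by (simp add: left_diff_distrib)
    have D_bound: "norm (of_real (S y - \<mu> y) * h y) \<le> \<delta> * norm (h y)" for y
      using RS_sum_unit_step[OF partition mesh step, of y] unfolding S_def norm_mult norm_of_real
      by (intro mult_right_mono) auto
    have "norm (LINT y|M. of_real (S y - \<mu> y) * h y) \<le> (LINT y|M. norm (of_real (S y - \<mu> y) * h y))"
      by (rule integral_norm_bound)
    also have "\<dots> \<le> (LINT y|M. \<delta> * norm (h y))"
      using D_bound D_int assms(2) by (intro integral_mono) auto
    also have "\<dots> = \<delta> * N"
      by (simp add: N_def)
    finally have "norm (LINT y|M. of_real (S y - \<mu> y) * h y) < \<epsilon>"
      using \<open>\<delta> * N < \<epsilon>\<close> by linarith
    moreover have "(LINT y|M. of_real (S y - \<mu> y) * h y)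
        = (LINT y|M. of_real (S y) * h y) - (LINT y|M. of_real (\<mu> y) * h y)"
      using RS_sum(1) int_\<mu> by (simp add: left_diff_distrib Bochner_Integration.integral_diff)
    ultimately show "cmod ((\<Sum>i<n. of_real (\<xi> i) * ((LINT y|M. of_real (c (x (Suc i)) y) * h y)
              - (LINT y|M. of_real (c (x i) y) * h y))) - (LINT y|M. of_real (\<mu> y) * h y)) < \<epsilon>"
      using RS_sum(2) by simp
  qed
qed

lemma integrable_weighted_inner:
  fixes u v :: "'a \<Rightarrow> complex" and w :: "'a \<Rightarrow> real"
  assumes "w \<in> borel_measurable M" "\<And>x. 0 \<le> w x"
    and "u \<in> borel_measurable M" "v \<in> borel_measurable M"
    and "integrable M (\<lambda>x. w x * (cmod (u x))\<^sup>2)" "integrable M (\<lambda>x. w x * (cmod (v x))\<^sup>2)"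
  shows "integrable M (\<lambda>x. of_real (w x) * u x * cnj (v x))"
proof (rule Bochner_Integration.integrable_bound)
  show "integrable M (\<lambda>x. w x * (cmod (u x))\<^sup>2 + w x * (cmod (v x))\<^sup>2)"
    using assms(5,6) by simp
  have "(\<lambda>x. cnj (v x)) \<in> borel_measurable M"
    using borel_measurable_continuous_on[OF continuous_on_cnj[OF continuous_on_id] assms(4)] .
  then show "(\<lambda>x. of_real (w x) * u x * cnj (v x)) \<in> borel_measurable M"
    using assms(1,3) by measurable
  have "cmod (u x) * cmod (v x) \<le> (cmod (u x))\<^sup>2 + (cmod (v x))\<^sup>2" for x
    using sum_squares_bound[of "cmod (u x)" "cmod (v x)"]
      mult_nonneg_nonneg[OF norm_ge_zero norm_ge_zero, of "u x" "v x"] by linarith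
  then have "w x * (cmod (u x) * cmod (v x)) \<le> w x * ((cmod (u x))\<^sup>2 + (cmod (v x))\<^sup>2)" for x
    using assms(2) by (intro mult_left_mono)
  then show "AE x in M. norm (of_real (w x) * u x * cnj (v x))
      \<le> norm (w x * (cmod (u x))\<^sup>2 + w x * (cmod (v x))\<^sup>2)"
    using assms(2) by (simp add: norm_mult algebra_simps)
qed

definition ipK_integrand1 :: "real \<Rightarrow> dens \<Rightarrow> dens \<Rightarrow> real \<Rightarrow> complex" where
  "ipK_integrand1 q f g k = of_real (S11 q k) * fst f k * cnj (fst g k)"

definition ipK_integrand2 :: "real \<Rightarrow> dens \<Rightarrow> dens \<Rightarrow> real \<Rightarrow> complex" where
  "ipK_integrand2 q f g k = of_real (S22 q k) * snd f k * cnj (snd g k)"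

lemma integrable_ipK_integrands:
  assumes "0 < q" "in_K q f" "in_K q g"
  shows "integrable lborel (ipK_integrand1 q f g)" and "integrable lborel (ipK_integrand2 q f g)"
proof -
  have "S11 q \<in> borel_measurable lborel" "S22 q \<in> borel_measurable lborel"
    unfolding S11_def S22_def by measurable
  moreover have "0 \<le> S11 q k" "0 \<le> S22 q k" for k
    using assms(1) unfolding S11_def S22_def by (auto intro!: divide_nonneg_nonneg)
  ultimately show "integrable lborel (ipK_integrand1 q f g)"
    and "integrable lborel (ipK_integrand2 q f g)"
    using assms(2,3) unfolding in_K_def ipK_integrand1_def ipK_integrand2_def
    by (auto intro!: integrable_weighted_inner)
qed

lemma ipK_diagonal_multiplier:
  assumes "0 < q" "in_K q f" "in_K q g"
    and "m1 \<in> borel_measurable lborel" "m2 \<in> borel_measurable lborel"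
    and "\<And>k. \<bar>m1 k\<bar> \<le> B" "\<And>k. \<bar>m2 k\<bar> \<le> B"
  shows "ipK q f (\<lambda>k. of_real (m1 k) * fst g k, \<lambda>k. of_real (m2 k) * snd g k)
       = (LINT k|lborel. of_real (m1 k) * ipK_integrand1 q f g k)
       + (LINT k|lborel. of_real (m2 k) * ipK_integrand2 q f g k)"
proof -
  have "ipK q f (\<lambda>k. of_real (m1 k) * fst g k, \<lambda>k. of_real (m2 k) * snd g k)
      = (LINT k|lborel. of_real (m1 k) * ipK_integrand1 q f g k
          + of_real (m2 k) * ipK_integrand2 q f g k)"
    unfolding ipK_def ipK_integrand1_def ipK_integrand2_def by (simp add: mult_ac)
  also have "\<dots> = (LINT k|lborel. of_real (m1 k) * ipK_integrand1 q f g k)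
       + (LINT k|lborel. of_real (m2 k) * ipK_integrand2 q f g k)"
    using integrable_ipK_integrands[OF assms(1-3)] assms(4-7)
    by (intro Bochner_Integration.integral_add integrable_bounded_multiplier)
  finally show ?thesis .
qed

lemma K_measurable: "K11 q \<in> borel_measurable lborel" "K22 q \<in> borel_measurable lborel"
  unfolding K11_def K22_def by measurable

lemma ipK_NP_eq:
  assumes "0 < q" "in_K q f" "in_K q g"
  shows "ipK q f (NP q g) = (LINT k|lborel. of_real (K11 q k) * ipK_integrand1 q f g k)
                          + (LINT k|lborel. of_real (K22 q k) * ipK_integrand2 q f g k)"
proof -
  have "\<bar>K11 q k\<bar> \<le> 1/2" "\<bar>K22 q k\<bar> \<le> 1/2" for k
    using assms(1) by (simp_all add: K11_def K22_def)
  then show ?thesis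
    unfolding NP_def by (intro ipK_diagonal_multiplier assms K_measurable)
qed

definition E1_coeff :: "real \<Rightarrow> real \<Rightarrow> real \<Rightarrow> real" where
  "E1_coeff q t k =
     (if t < 0 then indicator {..- ln (-2*t) / q} k - indicator {..ln (-2*t) / q} k else 1)"

definition E2_coeff :: "real \<Rightarrow> real \<Rightarrow> real \<Rightarrow> real" where
  "E2_coeff q t k =
     (if t \<le> 0 then 0 else indicator {..ln (2*t) / q} k - indicator {..- ln (2*t) / q} k + 1)"

lemma Efam_eq_multiplier:
  "Efam q t \<phi> = (\<lambda>k. of_real (E1_coeff q t k) * fst \<phi> k, \<lambda>k. of_real (E2_coeff q t k) * snd \<phi> k)"
  unfolding Efam_def P1_def P2_def E1_coeff_def E2_coeff_def chi_def
  by (auto simp: fun_eq_iff algebra_simps indicator_def)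

lemma E_coeff_measurable:
  "E1_coeff q t \<in> borel_measurable lborel" "E2_coeff q t \<in> borel_measurable lborel"
  unfolding E1_coeff_def E2_coeff_def by measurable

lemma ipK_Efam_eq:
  assumes "0 < q" "in_K q f" "in_K q g"
  shows "ipK q f (Efam q t g) = (LINT k|lborel. of_real (E1_coeff q t k) * ipK_integrand1 q f g k)
                              + (LINT k|lborel. of_real (E2_coeff q t k) * ipK_integrand2 q f g k)"
proof -
  have "\<bar>E1_coeff q t k\<bar> \<le> 2" "\<bar>E2_coeff q t k\<bar> \<le> 2" for k
    unfolding E1_coeff_def E2_coeff_def by (simp_all add: indicator_def)
  then show ?thesis
    unfolding Efam_eq_multiplier by (intro ipK_diagonal_multiplier assms E_coeff_measurable)
qed

lemma decay_exponent:
  fixes q a :: real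
  assumes "0 < q" "0 < a" "a \<le> 1"
  shows "0 \<le> - ln a / q" and "a = exp (- (- ln a / q) * q)"
  using assms by (auto intro: divide_nonpos_pos)

lemma E1_coeff_unit_step:
  assumes "0 < q"
  shows "unit_step_at (-1/2) (1/2) (\<lambda>t. E1_coeff q t k) (K11 q k)"
proof -
  have "(E1_coeff q t k = 0 \<and> t \<le> K11 q k) \<or> (E1_coeff q t k = 1 \<and> K11 q k \<le> t)"
    if "-1/2 \<le> t" "t \<le> 1/2" for t
  proof (cases "t < 0")
    case True
    define s where "s = - ln (-2*t) / q"
    have "0 \<le> s" and t_eq: "t = - exp (- s * q) / 2"
      using decay_exponent[OF assms, of "-2*t"] True that unfolding s_def by auto
    have "K11 q k \<le> t \<longleftrightarrow> exp (- s * q) \<le> exp (- \<bar>k\<bar> * q)"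
      and "t \<le> K11 q k \<longleftrightarrow> exp (- \<bar>k\<bar> * q) \<le> exp (- s * q)"
      by (simp_all add: K11_def t_eq)
    then have "K11 q k \<le> t \<longleftrightarrow> \<bar>k\<bar> \<le> s" and "t \<le> K11 q k \<longleftrightarrow> s \<le> \<bar>k\<bar>"
      using assms by simp_all
    moreover have "E1_coeff q t k = indicator {..s} k - indicator {..-s} k"
      using True by (simp add: E1_coeff_def s_def)
    ultimately show ?thesis
      using \<open>0 \<le> s\<close> by (auto simp: indicator_def)
  next
    case False
    have "K11 q k < 0"
      unfolding K11_def by simp
    then show ?thesis
      using False by (simp add: E1_coeff_def)
  qed
  then show ?thesis
    unfolding unit_step_at_def by (simp add: E1_coeff_def)
qed

lemma E2_coeff_unit_step:
  assumes "0 < q"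
  shows "unit_step_at (-1/2) (1/2) (\<lambda>t. E2_coeff q t k) (K22 q k)"
proof -
  have "(E2_coeff q t k = 0 \<and> t \<le> K22 q k) \<or> (E2_coeff q t k = 1 \<and> K22 q k \<le> t)"
    if "-1/2 \<le> t" "t \<le> 1/2" for t
  proof (cases "t \<le> 0")
    case False
    define s where "s = - ln (2*t) / q"
    have "0 \<le> s" and t_eq: "t = exp (- s * q) / 2"
      using decay_exponent[OF assms, of "2*t"] False that unfolding s_def by auto
    have "K22 q k \<le> t \<longleftrightarrow> exp (- \<bar>k\<bar> * q) \<le> exp (- s * q)"
      and "t \<le> K22 q k \<longleftrightarrow> exp (- s * q) \<le> exp (- \<bar>k\<bar> * q)"
      by (simp_all add: K22_def t_eq)
    then have "K22 q k \<le> t \<longleftrightarrow> s \<le> \<bar>k\<bar>" and "t \<le> K22 q k \<longleftrightarrow> \<bar>k\<bar> \<le> s"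
      using assms by simp_all
    moreover have "E2_coeff q t k = indicator {..-s} k - indicator {..s} k + 1"
      using False by (simp add: E2_coeff_def s_def)
    ultimately show ?thesis
      using \<open>0 \<le> s\<close> by (auto simp: indicator_def)
  next
    case True
    have "0 < K22 q k"
      unfolding K22_def by simp
    then show ?thesis
      using True by (simp add: E2_coeff_def)
  qed
  then show ?thesis
    unfolding unit_step_at_def by (simp add: E2_coeff_def)
qed

lemma q_of_pos: "0 < r \<Longrightarrow> r < R \<Longrightarrow> 0 < q_of R r"
  unfolding q_of_def by (simp add: frac_less2)

theorem theorem3p5:
  fixes R r :: real and f g :: dens
  assumes "0 < r" and "r < R"
    and "in_K (q_of R r) f" and "in_K (q_of R r) g"
  shows "has_RS_integral (\<lambda>t. complex_of_real t)
           (\<lambda>t. ipK (q_of R r) f (Efam (q_of R r) t g))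
           (-1/2) (1/2)
           (ipK (q_of R r) f (NP (q_of R r) g))"
proof -
  define q where "q = q_of R r"
  have q: "0 < q" and f: "in_K q f" and g: "in_K q g"
    using assms q_of_pos unfolding q_def by auto
  have "has_RS_integral of_real
      (\<lambda>t. (LINT k|lborel. of_real (E1_coeff q t k) * ipK_integrand1 q f g k)
         + (LINT k|lborel. of_real (E2_coeff q t k) * ipK_integrand2 q f g k)) (-1/2) (1/2)
      ((LINT k|lborel. of_real (K11 q k) * ipK_integrand1 q f g k)
         + (LINT k|lborel. of_real (K22 q k) * ipK_integrand2 q f g k))"
    using integrable_ipK_integrands[OF q f g] E1_coeff_unit_step[OF q] E2_coeff_unit_step[OF q]
    by (intro has_RS_integral_add has_RS_integral_unit_step_multiplier E_coeff_measurable
        K_measurable) auto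
  then show ?thesis
    unfolding q_def[symmetric] ipK_Efam_eq[OF q f g] ipK_NP_eq[OF q f g] .
qed

end
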